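(* Let $\mathbf{u}$ be quasi-definite with SMOP $(P_n)$ and associated polynomials of the first kind $(P^{(1)}_n)$, let $c\in\mathbb{C}$ with $P_n(c)\ne0$ for all $n\ge0$, and let $\widetilde{\mathbf{u}}=(x-c)\mathbf{u}$ (which is then quasi-definite, with $\widetilde{\mathbf{u}}_0\neq0$), with SMOP $(\widetilde P_n)$ and associated polynomials of the first kind $(\widetilde P^{(1)}_n)$. Define $$R_n(x)=\frac{\mathbf{u}_0}{\widetilde{\mathbf{u}}_0}\Big[(x-c)P^{(1)}_n(x)-P_{n+1}(x)\Big],\quad n\ge-1 .$$ Then for every $n\ge1$, $$(x-c)\,\widetilde P^{(1)}_{n-1}(x)=R_n(x)-\frac{P_{n+1}(c)}{P_n(c)}\,R_{n-1}(x).$$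
   Context: Linear functionals on complex polynomials, moments $\mathbf{u}_n=\langle\mathbf{u},x^n\rangle$, $\langle(x-c)\mathbf{u},p\rangle=\langle\mathbf{u},(x-c)p\rangle$. Quasi-definite: all leading principal Hankel minors of the moments nonzero; a quasi-definite functional has a unique sequence of monic orthogonal polynomials (SMOP) $(P_n)$ with $xP_n=P_{n+1}+b_nP_n+a_nP_{n-1}$, $P_{-1}=0$, $P_0=1$, $a_n\neq0$. Associated polynomials of the first kind: monic, $xP^{(1)}_n=P^{(1)}_{n+1}+b_{n+1}P^{(1)}_n+a_{n+1}P^{(1)}_{n-1}$, $P^{(1)}_{-1}=0$, $P^{(1)}_0=1$; equivalently $P^{(1)}_{n-1}(x)=\frac{1}{\mathbf{u}_0}\langle\mathbf{u}_y,\frac{P_n(x)-P_n(y)}{x-y}\rangle$. The SMOP of $(x-c)\mathbf{u}$ is $\widetilde P_n(x)=\big(P_{n+1}(x)-\frac{P_{n+1}(c)}{P_n(c)}P_n(x)\big)/(x-c)$. *)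

theory Defs
  imports "HOL-Computational_Algebra.Polynomial" "Jordan_Normal_Form.Determinant"
begin

text \<open>A linear functional u on complex polynomials is represented by its moment
sequence m, with m n = <u, x^n>.\<close>

definition lin :: "(nat \<Rightarrow> complex) \<Rightarrow> complex poly \<Rightarrow> complex" where
  "lin m p = (\<Sum>i\<le>degree p. coeff p i * m i)"

text \<open>Moments of (x - c) u: <(x-c)u, x^n> = <u, x^(n+1)> - c <u, x^n>.\<close>
definition mult_shift :: "complex \<Rightarrow> (nat \<Rightarrow> complex) \<Rightarrow> nat \<Rightarrow> complex" where
  "mult_shift c m n = m (Suc n) - c * m n"

definition quasi_definite :: "(nat \<Rightarrow> complex) \<Rightarrow> bool" where
  "quasi_definite m \<longleftrightarrow> (\<forall>n\<ge>1. det (mat n n (\<lambda>(i,j). m (i + j))) \<noteq> 0)"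

definition is_SMOP :: "(nat \<Rightarrow> complex) \<Rightarrow> (nat \<Rightarrow> complex poly) \<Rightarrow> bool" where
  "is_SMOP m P \<longleftrightarrow> (\<forall>n. degree (P n) = n \<and> lead_coeff (P n) = 1 \<and>
      (\<forall>k<n. lin m (P n * monom 1 k) = 0) \<and> lin m (P n * monom 1 n) \<noteq> 0)"

text \<open>Associated polynomials of the first kind: assoc1 m P n = P^(1)_n, defined by
  P^(1)_n(x) = (1/u_0) <u_y, (P_(n+1)(x) - P_(n+1)(y))/(x-y)>, where
  (x^k - y^k)/(x-y) = sum_(j<k) x^j y^(k-1-j).\<close>
definition assoc1 :: "(nat \<Rightarrow> complex) \<Rightarrow> (nat \<Rightarrow> complex poly) \<Rightarrow> nat \<Rightarrow> complex poly" where
  "assoc1 m P n = smult (1 / m 0)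
     (\<Sum>k\<le>degree (P (Suc n)). \<Sum>j<k. monom (coeff (P (Suc n)) k * m (k - 1 - j)) j)"

definition R :: "(nat \<Rightarrow> complex) \<Rightarrow> complex \<Rightarrow> (nat \<Rightarrow> complex poly) \<Rightarrow> nat \<Rightarrow> complex poly" where
  "R m c P n = smult (m 0 / mult_shift c m 0) ([:-c, 1:] * assoc1 m P n - P (Suc n))"

end

theory Submission
  imports Defs
begin

text \<open>
  With \<open>a = P\<^sub>n\<^sub>+\<^sub>1(c) / P\<^sub>n(c)\<close>, the polynomial \<open>P\<^sub>n\<^sub>+\<^sub>1 - a P\<^sub>n\<close> vanishes at \<open>c\<close>; its quotient
  by \<open>x - c\<close> is monic of degree \<open>n\<close> and orthogonal for \<open>(x - c)u\<close>, hence is the \<open>n\<close>-th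
  orthogonal polynomial of \<open>(x - c)u\<close> (Christoffel's formula). Now apply the linear map
  \<open>p \<mapsto> \<langle>u\<^sub>y, (p(x) - p(y))/(x - y)\<rangle>\<close> to this identity: it sends \<open>(x - c)q\<close> to
  \<open>u\<^sub>0 q + \<langle>((x - c)u)\<^sub>y, (q(x) - q(y))/(x - y)\<rangle>\<close>, and the term \<open>u\<^sub>0 q\<close> cancels against
  the \<open>P\<^sub>n\<^sub>+\<^sub>1 - a P\<^sub>n\<close> part of \<open>R\<^sub>n - a R\<^sub>n\<^sub>-\<^sub>1\<close>.
\<close>

lemma linear_factor_mult: "[:-c, 1:] * p = pCons 0 p - smult (c :: 'a::comm_ring_1) p"
  by (simp add: poly_eq_iff coeff_pCons algebra_simps split: nat.split)

lemma mult_shift_eq: "mult_shift c m = (\<lambda>i. m (Suc i) - c * m i)"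
  by (simp add: fun_eq_iff mult_shift_def)

lemma sum_coeffs_upto:
  fixes g :: "nat \<Rightarrow> 'a::zero \<Rightarrow> 'b::comm_monoid_add"
  assumes "degree p \<le> N" and "\<And>i. g i 0 = 0"
  shows "(\<Sum>i\<le>degree p. g i (coeff p i)) = (\<Sum>i\<le>N. g i (coeff p i))"
  by (rule sum.mono_neutral_left) (auto simp: coeff_eq_0 assms)

lemma lin_upto:
  assumes "degree p \<le> N"
  shows "lin m p = (\<Sum>i\<le>N. coeff p i * m i)"
  unfolding lin_def using sum_coeffs_upto[where g = "\<lambda>i a. a * m i", OF assms] by simp

lemma lin_zero: "lin m 0 = 0"
  by (simp add: lin_def)

lemma lin_add: "lin m (p + q) = lin m p + lin m q"
proof -
  define N where "N = max (degree p) (degree q)"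
  have "degree (p + q) \<le> N" "degree p \<le> N" "degree q \<le> N"
    by (auto simp: N_def degree_add_le)
  then show ?thesis by (simp add: lin_upto sum.distrib distrib_right)
qed

lemma lin_smult: "lin m (smult a p) = a * lin m p"
  using lin_upto[of "smult a p" "degree p" m]
  by (simp add: lin_def degree_smult_le sum_distrib_left mult.assoc)

lemma lin_diff: "lin m (p - q) = lin m p - lin m q"
  using lin_add[of m "p - q" q] by simp

lemma lin_sum: "lin m (\<Sum>i\<in>A. f i) = (\<Sum>i\<in>A. lin m (f i))"
  by (induction A rule: infinite_finite_induct) (simp_all add: lin_add lin_zero)

lemma lin_one: "lin m 1 = m 0"
  by (simp add: lin_def)

lemma lin_moments_diff: "lin (\<lambda>i. m i - c * m' i) p = lin m p - c * lin m' p"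
  by (simp add: lin_def algebra_simps sum_subtractf sum_distrib_left)

lemma lin_pCons_0: "lin m (pCons 0 p) = lin (\<lambda>i. m (Suc i)) p"
proof -
  have "lin m (pCons 0 p) = (\<Sum>i\<le>Suc (degree p). coeff (pCons 0 p) i * m i)"
    by (rule lin_upto) (simp add: degree_pCons_le)
  also have "\<dots> = (\<Sum>i\<le>degree p. coeff p i * m (Suc i))"
    by (subst sum.atMost_Suc_shift) simp
  finally show ?thesis by (simp add: lin_def)
qed

lemma lin_mult_shift: "lin (mult_shift c m) p = lin m ([:-c, 1:] * p)"
  by (simp add: mult_shift_eq linear_factor_mult lin_moments_diff lin_diff lin_smult lin_pCons_0)

text \<open>The polynomial \<open>\<langle>u\<^sub>y, (p(x) - p(y))/(x - y)\<rangle>\<close> in \<open>x\<close>.\<close>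

definition diff_quotient :: "(nat \<Rightarrow> complex) \<Rightarrow> complex poly \<Rightarrow> complex poly" where
  "diff_quotient m p = (\<Sum>k\<le>degree p. \<Sum>j<k. monom (coeff p k * m (k - 1 - j)) j)"

lemma assoc1_eq_diff_quotient: "assoc1 m P n = smult (1 / m 0) (diff_quotient m (P (Suc n)))"
  by (simp add: assoc1_def diff_quotient_def)

lemma diff_quotient_upto:
  assumes "degree p \<le> N"
  shows "diff_quotient m p = (\<Sum>k\<le>N. \<Sum>j<k. monom (coeff p k * m (k - 1 - j)) j)"
  unfolding diff_quotient_def
  using sum_coeffs_upto[where g = "\<lambda>k a. \<Sum>j<k. monom (a * m (k - 1 - j)) j", OF assms] by simp

lemma diff_quotient_add: "diff_quotient m (p + q) = diff_quotient m p + diff_quotient m q"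
proof -
  define N where "N = max (degree p) (degree q)"
  have "degree (p + q) \<le> N" "degree p \<le> N" "degree q \<le> N"
    by (auto simp: N_def degree_add_le)
  then show ?thesis
    by (simp add: diff_quotient_upto sum.distrib[symmetric] distrib_right add_monom[symmetric])
qed

lemma smult_sum_right: "smult a (\<Sum>i\<in>A. f i) = (\<Sum>i\<in>A. smult a (f i))"
  by (induction A rule: infinite_finite_induct) (auto simp: smult_add_right)

lemma diff_quotient_smult: "diff_quotient m (smult a p) = smult a (diff_quotient m p)"
  using diff_quotient_upto[of "smult a p" "degree p" m]
  by (simp add: diff_quotient_def degree_smult_le smult_sum_right smult_monom mult.assoc)

lemma diff_quotient_diff: "diff_quotient m (p - q) = diff_quotient m p - diff_quotient m q"
  using diff_quotient_add[of m "p - q" q] by simp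

lemma diff_quotient_moments_diff:
  "diff_quotient (\<lambda>i. m i - c * m' i) p = diff_quotient m p - smult c (diff_quotient m' p)"
  by (simp add: diff_quotient_def smult_sum_right smult_monom right_diff_distrib mult.left_commute
      diff_monom[symmetric] sum_subtractf)

lemma diff_quotient_pCons_0:
  "diff_quotient m (pCons 0 p) = smult (m 0) p + diff_quotient (\<lambda>i. m (Suc i)) p"
proof -
  have "diff_quotient m (pCons 0 p)
      = (\<Sum>k\<le>Suc (degree p). \<Sum>j<k. monom (coeff (pCons 0 p) k * m (k - 1 - j)) j)"
    by (rule diff_quotient_upto) (simp add: degree_pCons_le)
  also have "\<dots> = (\<Sum>k\<le>degree p. \<Sum>j<Suc k. monom (coeff p k * m (k - j)) j)"
    by (subst sum.atMost_Suc_shift) simp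
  also have "\<dots> = (\<Sum>k\<le>degree p. monom (coeff p k * m 0) k
      + (\<Sum>j<k. monom (coeff p k * m (Suc (k - 1 - j))) j))"
    by (intro sum.cong refl) (simp add: Suc_diff_Suc)
  also have "\<dots> = smult (m 0) p + diff_quotient (\<lambda>i. m (Suc i)) p"
    using smult_sum_right[of "m 0" "\<lambda>k. monom (coeff p k) k" "{..degree p}"]
    by (simp add: sum.distrib diff_quotient_def smult_monom mult.commute poly_as_sum_of_monoms)
  finally show ?thesis .
qed

lemma diff_quotient_mult_shift:
  "diff_quotient m ([:-c, 1:] * p) = smult (m 0) p + diff_quotient (mult_shift c m) p"
  by (simp add: mult_shift_eq linear_factor_mult diff_quotient_moments_diff diff_quotient_diff
      diff_quotient_smult diff_quotient_pCons_0)

lemma monom_eq_smult_monom_1: "monom (a :: 'a::comm_semiring_1) k = smult a (monom 1 k)"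
  by (simp add: smult_monom)

lemma is_SMOPD:
  assumes "is_SMOP w P"
  shows "degree (P n) = n" and "lead_coeff (P n) = 1"
    and "k < n \<Longrightarrow> lin w (P n * monom 1 k) = 0" and "lin w (P n * monom 1 n) \<noteq> 0"
  using assms unfolding is_SMOP_def by blast+

lemma lin_orthogonal_mult:
  assumes "\<forall>k<n. lin w (S * monom 1 k) = 0" and "\<forall>i\<ge>n. coeff q i = 0"
  shows "lin w (S * q) = 0"
proof -
  have "S * q = (\<Sum>i\<le>degree q. smult (coeff q i) (S * monom 1 i))"
    by (subst (1) poly_as_sum_of_monoms[of q, symmetric])
      (simp add: sum_distrib_left monom_eq_smult_monom_1[of "coeff q _"])
  then have "lin w (S * q) = (\<Sum>i\<le>degree q. coeff q i * lin w (S * monom 1 i))"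
    by (simp add: lin_sum lin_smult)
  also have "\<dots> = 0"
    using assms by (intro sum.neutral ballI) (metis mult_eq_0_iff not_le)
  finally show ?thesis .
qed

lemma SMOP_lin_mult_degree_le:
  assumes "is_SMOP w P" and "degree q \<le> d"
  shows "lin w (P d * q) = coeff q d * lin w (P d * monom 1 d)"
proof -
  have "lin w (P d * (q - monom (coeff q d) d)) = 0"
  proof (rule lin_orthogonal_mult)
    show "\<forall>k<d. lin w (P d * monom 1 k) = 0"
      using is_SMOPD(3)[OF assms(1)] by blast
    show "\<forall>i\<ge>d. coeff (q - monom (coeff q d) d) i = 0"
      using assms(2) by (auto simp: coeff_eq_0)
  qed
  moreover have "P d * q = P d * (q - monom (coeff q d) d) + smult (coeff q d) (P d * monom 1 d)"
    by (simp add: algebra_simps monom_eq_smult_monom_1[of "coeff q d"])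
  ultimately show ?thesis
    by (simp add: lin_add lin_smult)
qed

lemma SMOP_moment_0_nonzero:
  assumes "is_SMOP m P"
  shows "m 0 \<noteq> 0"
proof -
  have "P 0 = 1"
    using is_SMOPD(1,2)[OF assms, of 0] by (metis degree_0_id one_pCons)
  with is_SMOPD(4)[OF assms, of 0] show ?thesis
    by (simp add: lin_one)
qed

lemma SMOP_unique:
  assumes "is_SMOP w P" and "degree T = n" and "lead_coeff T = 1"
    and orth_T: "\<forall>k<n. lin w (T * monom 1 k) = 0"
  shows "T = P n"
proof (rule ccontr)
  define D where "D = T - P n"
  assume "T \<noteq> P n"
  then have "D \<noteq> 0" by (simp add: D_def)
  note P = is_SMOPD[OF assms(1)]
  have "\<forall>i\<ge>n. coeff D i = 0"
    using assms(2,3) P(1,2)[of n] by (auto simp: D_def coeff_eq_0 le_less)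
  then have d: "degree D < n"
    using \<open>D \<noteq> 0\<close> by (metis leading_coeff_0_iff not_le)
  have orth_D: "\<forall>k<n. lin w (D * monom 1 k) = 0"
    using orth_T P(3)[of _ n] by (simp add: D_def left_diff_distrib lin_diff)
  have "lin w (D * P (degree D)) = 0"
    using d P(1) by (intro lin_orthogonal_mult[OF orth_D]) (auto simp: coeff_eq_0)
  moreover have "lin w (P (degree D) * D) = lead_coeff D * lin w (P (degree D) * monom 1 (degree D))"
    by (rule SMOP_lin_mult_degree_le[OF assms(1)]) simp
  ultimately show False
    using \<open>D \<noteq> 0\<close> P(4) by (simp add: mult.commute)
qed

lemma Christoffel_formula:
  assumes P: "is_SMOP m P" and Pt: "is_SMOP (mult_shift c m) Pt" and "poly (P n) c \<noteq> 0"
  shows "[:-c, 1:] * Pt n = P (Suc n) - smult (poly (P (Suc n)) c / poly (P n) c) (P n)"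
proof -
  define Q where "Q = P (Suc n) - smult (poly (P (Suc n)) c / poly (P n) c) (P n)"
  have "poly Q c = 0"
    using assms(3) by (simp add: Q_def)
  then obtain T where Q: "Q = [:-c, 1:] * T"
    by (metis dvdE poly_eq_0_iff_dvd)
  note deg_P = is_SMOPD(1)[OF P] and monic_P = is_SMOPD(2)[OF P]
  have "degree Q \<le> Suc n"
    unfolding Q_def using deg_P by (intro degree_diff_le) (auto intro: order.trans[OF degree_smult_le])
  moreover have coeff_Q: "coeff Q (Suc n) = 1"
    using deg_P monic_P[of "Suc n"] by (simp add: Q_def coeff_eq_0)
  ultimately have deg_Q: "degree Q = Suc n"
    by (metis le_antisym le_degree zero_neq_one)
  then have "T \<noteq> 0"
    using Q by auto
  then have deg_T: "degree T = n"
    using degree_mult_eq[of "[:-c, 1:]" T] deg_Q Q by (simp del: mult_pCons_left)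
  have "lead_coeff T = 1"
    using lead_coeff_mult[of "[:-c, 1:]" T] coeff_Q deg_Q Q by (simp del: mult_pCons_left)
  moreover have "\<forall>k<n. lin (mult_shift c m) (T * monom 1 k) = 0"
  proof (intro allI impI)
    fix k assume "k < n"
    then have "lin m (P (Suc n) * monom 1 k) = 0" "lin m (P n * monom 1 k) = 0"
      using is_SMOPD(3)[OF P] by simp_all
    then have "lin m (Q * monom 1 k) = 0"
      by (simp add: Q_def left_diff_distrib lin_diff lin_smult)
    then show "lin (mult_shift c m) (T * monom 1 k) = 0"
      by (simp only: lin_mult_shift Q mult.assoc)
  qed
  ultimately have "T = Pt n"
    using SMOP_unique[OF Pt deg_T] by blast
  then show ?thesis
    using Q by (simp add: Q_def)
qed

lemma R_combination:
  assumes "n \<ge> 1"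
  shows "R m c P n - smult a (R m c P (n - 1))
    = smult (m 0 / mult_shift c m 0)
        ([:-c, 1:] * (assoc1 m P n - smult a (assoc1 m P (n - 1))) - (P (Suc n) - smult a (P n)))"
proof -
  have "smult k (L * A1 - P1) - smult a (smult k (L * A0 - P0))
      = smult k (L * (A1 - smult a A0) - (P1 - smult a P0))" for k and L A1 A0 P1 P0 :: "complex poly"
    by (simp add: algebra_simps smult_diff_right smult_add_right)
  moreover have "Suc (n - 1) = n"
    using assms by simp
  ultimately show ?thesis
    unfolding R_def by metis
qed

lemma assoc1_combination:
  assumes "is_SMOP m P" and "n \<ge> 1"
    and Christoffel: "[:-c, 1:] * Pt n = P (Suc n) - smult a (P n)"
  shows "assoc1 m P n - smult a (assoc1 m P (n - 1))
    = Pt n + smult (1 / m 0) (diff_quotient (mult_shift c m) (Pt n))"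
proof -
  have "Suc (n - 1) = n"
    using assms(2) by simp
  then have "assoc1 m P n - smult a (assoc1 m P (n - 1))
      = smult (1 / m 0) (diff_quotient m (P (Suc n) - smult a (P n)))"
    unfolding assoc1_eq_diff_quotient
    by (simp add: diff_quotient_diff diff_quotient_smult smult_diff_right)
  also have "\<dots> = smult (1 / m 0) (smult (m 0) (Pt n) + diff_quotient (mult_shift c m) (Pt n))"
    unfolding Christoffel[symmetric] diff_quotient_mult_shift ..
  finally show ?thesis
    using SMOP_moment_0_nonzero[OF assms(1)] by (simp add: smult_add_right)
qed

theorem mainTheorem9:
  fixes m :: "nat \<Rightarrow> complex" and P Pt :: "nat \<Rightarrow> complex poly"
    and c :: complex and n :: nat
  assumes "quasi_definite m"
    and "is_SMOP m P"
    and "\<forall>k. poly (P k) c \<noteq> 0"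
    and "is_SMOP (mult_shift c m) Pt"
    and "n \<ge> 1"
  shows "[:-c, 1:] * assoc1 (mult_shift c m) Pt (n - 1)
           = R m c P n - smult (poly (P (Suc n)) c / poly (P n) c) (R m c P (n - 1))"
proof -
  define a where "a = poly (P (Suc n)) c / poly (P n) c"
  define L where "L = [:-c, 1 :: complex:]"
  define D where "D = diff_quotient (mult_shift c m) (Pt n)"
  have Christoffel: "L * Pt n = P (Suc n) - smult a (P n)"
    unfolding a_def L_def using Christoffel_formula assms(2-4) by blast
  have "R m c P n - smult a (R m c P (n - 1))
      = smult (m 0 / mult_shift c m 0) (L * (Pt n + smult (1 / m 0) D) - L * Pt n)"
    unfolding R_combination[OF assms(5)]
      assoc1_combination[where Pt = Pt, OF assms(2,5) Christoffel[unfolded L_def]]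
      L_def[symmetric] Christoffel[symmetric] D_def ..
  also have "\<dots> = L * assoc1 (mult_shift c m) Pt (n - 1)"
    using SMOP_moment_0_nonzero[OF assms(2)] assms(5)
    by (simp add: distrib_left assoc1_eq_diff_quotient D_def)
  finally show ?thesis
    by (simp only: a_def L_def)
qed

end
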